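(* Consider $n\ge2$ agents in $\mathbb{R}^d$ ($d\ge2$) with positions $p_i(t)$, an undirected graph $\mathcal{G}=(\mathcal{V},\mathcal{E})$, constant desired bearings $\{g_{ij}^*\}_{(i,j)\in\mathcal{E}}$, leaders $\mathcal{V}_\ell=\{1,\dots,n_\ell\}$ and followers $\mathcal{V}_f=\{n_\ell+1,\dots,n\}$. The leaders move with a constant velocity: $\dot p_i(t)=\mathbf{v}_i^*$ for $i\in\mathcal{V}_\ell$, and $\mathbf{v}_\ell^*=[(\mathbf{v}_1^* )^T,\dots,(\mathbf{v}_{n_\ell}^* )^T]^T$ is constant. The followers obey, for $i\in\mathcal{V}_f$, $$\dot p_i=-k_P\sum_{j\in\mathcal{N}_i}P_{g_{ij}^*}(p_i-p_j)-k_I\xi_i,\qquad \dot\xi_i=\sum_{j\in\mathcal{N}_i}P_{g_{ij}^*}(p_i-p_j),$$ with constants $k_P,k_I>0$ and arbitrary initial conditions. Suppose the standing assumption below holds. Let $\delta(t)=p_f(t)-p_f^*(t)$ with $p_f^*(t)=-\mathcal{L}_{ff}^{-1}\mathcal{L}_{f\ell}p_\ell(t)$ and $\xi=[\xi_{n_\ell+1}^T,\dots,\xi_n^T]^T$. Then $\delta(t)$ and $\xi(t)$ converge globally and exponentially to $\delta(\infty)=0$ and $\xi(\infty)=\mathcal{L}_{ff}^{-1}\mathcal{L}_{f\ell}\mathbf{v}_\ell^*/k_I$ respectively. Consequently, as $t\to\infty$, $p_f(t)-p_f^*(t)\to0$ where $p_f^*(t)=-\mathcal{L}_{ff}^{-1}\mathcal{L}_{f\ell}p_\ell(t)$,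 and $\dot p_f(t)\to -\mathcal{L}_{ff}^{-1}\mathcal{L}_{f\ell}\mathbf{v}_\ell^*$.
   Context: $P_x=I_d-\frac{xx^T}{\|x\|^2}$ for nonzero $x$; $\mathcal{N}_i$ is the neighbor set of $i$ in $\mathcal{G}$. $p_\ell=[p_1^T,\dots,p_{n_\ell}^T]^T$, $p_f=[p_{n_\ell+1}^T,\dots,p_n^T]^T$. The bearing Laplacian $\mathcal{L}\in\mathbb{R}^{dn\times dn}$ has $(i,j)$-th $d\times d$ block $0$ if $i\ne j,(i,j)\notin\mathcal{E}$; $-P_{g_{ij}^*}$ if $i\ne j,(i,j)\in\mathcal{E}$; $\sum_{k\in\mathcal{N}_i}P_{g_{ik}^*}$ if $i=j$; it is partitioned as $\begin{bmatrix}\mathcal{L}_{\ell\ell}&\mathcal{L}_{\ell f}\\ \mathcal{L}_{f\ell}&\mathcal{L}_{ff}\end{bmatrix}$ according to leaders/followers. Infinitesimal bearing rigidity of a configuration $q\in\mathbb{R}^{dn}$ (no two points coinciding): orient each edge, let $g_k=(q_j-q_i)/\|q_j-q_i\|$ for the $k$-th oriented edge, $F_B(q)=[g_1^T,\dots,g_m^T]^T$, $R_B(q)=\partial F_B/\partial q$; $\mathcal{G}(q)$ is infinitesimally bearing rigid if $\mathrm{Null}(R_B(q))=\mathrm{span}\{\mathbf{1}_n\otimes I_d,q\}$. Target formation: for each $t$, $p^*(t)\in\mathbb{R}^{dn}$ with $p_i^*(t)=p_i(t)$ for $i\in\mathcal{V}_\ell$ and $(p_j^*(t)-p_i^*(t))/\|p_j^*(t)-p_i^*(t)\|=g_{ij}^*$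 for all $(i,j)\in\mathcal{E}$. Standing assumption: the target formation exists for all $t$, is infinitesimally bearing rigid, and $n_\ell\ge 2$. Under this assumption $\mathcal{L}_{ff}$ is symmetric positive definite. *)

theory Defs
  imports "HOL-Analysis.Analysis"
begin

text \<open>A configuration is an element of real^'d^'n (the stacked vector).
  The graph is a symmetric irreflexive relation E; g i j is the desired bearing g_ij^*.
  VL is the set of leaders, its complement the followers.\<close>

definition undirected_graph :: "('n \<Rightarrow> 'n \<Rightarrow> bool) \<Rightarrow> bool" where
  "undirected_graph E \<longleftrightarrow> (\<forall>i j. E i j \<longrightarrow> E j i) \<and> (\<forall>i. \<not> E i i)"

definition proj :: "real^'d \<Rightarrow> real^'d \<Rightarrow> real^'d" where
  "proj x v = v - ((x \<bullet> v) / (x \<bullet> x)) *\<^sub>R x"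

definition bearing_lap :: "('n::finite \<Rightarrow> 'n \<Rightarrow> bool) \<Rightarrow> ('n \<Rightarrow> 'n \<Rightarrow> real^'d)
    \<Rightarrow> real^'d^'n \<Rightarrow> real^'d^'n" where
  "bearing_lap E g q = (\<chi> i. \<Sum>j\<in>{j. E i j}. proj (g i j) (q$i - q$j))"

definition fol :: "'n set \<Rightarrow> real^'d^'n \<Rightarrow> real^'d^'n" where
  "fol VL x = (\<chi> i. if i \<notin> VL then x$i else 0)"

definition lead :: "'n set \<Rightarrow> real^'d^'n \<Rightarrow> real^'d^'n" where
  "lead VL x = (\<chi> i. if i \<in> VL then x$i else 0)"

text \<open>The blocks L_ff and L_fl as linear maps (L_fl acts on the leader part of its
  argument, L_ff on the follower part; results are follower vectors).\<close>
definition L_ff :: "('n::finite \<Rightarrow> 'n \<Rightarrow> bool) \<Rightarrow> ('n \<Rightarrow> 'n \<Rightarrow> real^'d) \<Rightarrow> 'n set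
    \<Rightarrow> real^'d^'n \<Rightarrow> real^'d^'n" where
  "L_ff E g VL x = fol VL (bearing_lap E g (fol VL x))"

definition L_fl :: "('n::finite \<Rightarrow> 'n \<Rightarrow> bool) \<Rightarrow> ('n \<Rightarrow> 'n \<Rightarrow> real^'d) \<Rightarrow> 'n set
    \<Rightarrow> real^'d^'n \<Rightarrow> real^'d^'n" where
  "L_fl E g VL y = fol VL (bearing_lap E g (lead VL y))"

definition L_ff_inv :: "('n::finite \<Rightarrow> 'n \<Rightarrow> bool) \<Rightarrow> ('n \<Rightarrow> 'n \<Rightarrow> real^'d) \<Rightarrow> 'n set
    \<Rightarrow> real^'d^'n \<Rightarrow> real^'d^'n" where
  "L_ff_inv E g VL w = (THE x. fol VL x = x \<and> L_ff E g VL x = fol VL w)"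

definition bearing_fun :: "('n::finite \<Rightarrow> 'n \<Rightarrow> bool) \<Rightarrow> real^'d^'n \<Rightarrow> real^'d^('n \<times> 'n)" where
  "bearing_fun E q = (\<chi> e. if E (fst e) (snd e)
      then (1 / norm (q$(snd e) - q$(fst e))) *\<^sub>R (q$(snd e) - q$(fst e)) else 0)"

text \<open>Infinitesimal bearing rigidity: no coincident points, and the null space of the
  bearing rigidity matrix R_B(q) (Jacobian of F_B at q) is span{1 (x) I_d, q}.\<close>
definition inf_bearing_rigid :: "('n::finite \<Rightarrow> 'n \<Rightarrow> bool) \<Rightarrow> real^'d^'n \<Rightarrow> bool" where
  "inf_bearing_rigid E q \<longleftrightarrow> (\<forall>i j. i \<noteq> j \<longrightarrow> q$i \<noteq> q$j) \<and>
     (\<exists>R. (bearing_fun E has_derivative R) (at q) \<and>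
          {x. R x = 0} = span ({(\<chi> i. c) | c. True} \<union> {q}))"

definition target_formation :: "('n::finite \<Rightarrow> 'n \<Rightarrow> bool) \<Rightarrow> ('n \<Rightarrow> 'n \<Rightarrow> real^'d) \<Rightarrow> 'n set
    \<Rightarrow> real^'d^'n \<Rightarrow> real^'d^'n \<Rightarrow> bool" where
  "target_formation E g VL pl q \<longleftrightarrow> (\<forall>i\<in>VL. q$i = pl$i) \<and>
     (\<forall>i j. E i j \<longrightarrow> (1 / norm (q$j - q$i)) *\<^sub>R (q$j - q$i) = g i j)"

text \<open>Standing assumption: for every t \<ge> 0 a target formation exists and is infinitesimally
  bearing rigid (n_l \<ge> 2 is stated separately).\<close>
definition standing_assumption :: "('n::finite \<Rightarrow> 'n \<Rightarrow> bool) \<Rightarrow> ('n \<Rightarrow> 'n \<Rightarrow> real^'d) \<Rightarrow> 'n set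
    \<Rightarrow> (real \<Rightarrow> real^'d^'n) \<Rightarrow> bool" where
  "standing_assumption E g VL p \<longleftrightarrow>
     (\<forall>t\<ge>0. \<exists>q. target_formation E g VL (p t) q \<and> inf_bearing_rigid E q)"

definition closed_loop :: "('n::finite \<Rightarrow> 'n \<Rightarrow> bool) \<Rightarrow> ('n \<Rightarrow> 'n \<Rightarrow> real^'d) \<Rightarrow> 'n set
    \<Rightarrow> real^'d^'n \<Rightarrow> real \<Rightarrow> real \<Rightarrow> (real \<Rightarrow> real^'d^'n) \<Rightarrow> (real \<Rightarrow> real^'d^'n) \<Rightarrow> bool" where
  "closed_loop E g VL v kP kI p \<xi> \<longleftrightarrow> (\<forall>t\<ge>0.
     (\<forall>i\<in>VL. ((\<lambda>s. p s $ i) has_vector_derivative v$i) (at t within {0..})) \<and>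
     (\<forall>i. i \<notin> VL \<longrightarrow>
        ((\<lambda>s. p s $ i) has_vector_derivative
           (- kP *\<^sub>R (\<Sum>j\<in>{j. E i j}. proj (g i j) (p t $ i - p t $ j)) - kI *\<^sub>R (\<xi> t $ i)))
           (at t within {0..}) \<and>
        ((\<lambda>s. \<xi> s $ i) has_vector_derivative
           (\<Sum>j\<in>{j. E i j}. proj (g i j) (p t $ i - p t $ j))) (at t within {0..})))"

end

theory Submission
  imports Defs
begin

text \<open>
  With \<open>\<delta> = p\<^sub>f - p\<^sub>f\<^sup>*\<close> and \<open>e = \<xi>\<^sub>f - \<xi>(\<infinity>)\<close> the closed loop
  becomes the linear system \<open>\<delta>' = - k\<^sub>P L\<^sub>f\<^sub>f \<delta> - k\<^sub>I e\<close>, \<open>e' = L\<^sub>f\<^sub>f \<delta>\<close>,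
  because \<open>L\<^sub>f\<^sub>f \<delta> = L\<^sub>f\<^sub>f p\<^sub>f + L\<^sub>f\<^sub>\<ell> p\<^sub>\<ell>\<close> and the leaders move with constant velocity.
  \<open>L\<^sub>f\<^sub>f\<close> is symmetric, and it is positive definite on the follower subspace: a follower
  motion in its kernel preserves every bearing to first order, so by infinitesimal bearing
  rigidity it is a translation plus a scaling of the target formation, and two fixed leaders
  force it to vanish. For small \<open>\<epsilon> > 0\<close> the function
  \<open>V = \<delta>\<bullet>L\<^sub>f\<^sub>f\<delta> + k\<^sub>I |e|\<^sup>2 + \<epsilon> \<delta>\<bullet>e\<close> is comparable to \<open>|\<delta>|\<^sup>2 + |e|\<^sup>2\<close> and satisfies
  \<open>V' \<le> - \<beta> V\<close>, which gives the exponential bound. The follower velocity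
  \<open>- k\<^sub>P L\<^sub>f\<^sub>f \<delta> - k\<^sub>I \<xi>\<^sub>f\<close> then tends to \<open>- k\<^sub>I \<xi>(\<infinity>)\<close>.
\<close>

lemma norm_axis: "norm (axis i x) = norm x"
proof -
  have "(\<Sum>j\<in>UNIV. (norm (axis i x $ j))\<^sup>2) = (\<Sum>j\<in>UNIV. if j = i then (norm x)\<^sup>2 else 0)"
    by (intro sum.cong) (auto simp: axis_def)
  then show ?thesis
    by (simp add: norm_vec_def L2_set_def)
qed

lemma bounded_linear_axis: "bounded_linear (axis i)"
proof (rule bounded_linear_intro[where K=1])
  show "axis i (x + y) = axis i x + axis i y" "axis i (r *\<^sub>R x) = r *\<^sub>R axis i x" for x y and r :: real
    by (simp_all add: axis_def vec_eq_iff)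
qed (simp add: norm_axis)

lemma has_vector_derivative_vec:
  fixes f :: "real \<Rightarrow> 'a::real_normed_vector ^ 'n::finite"
  assumes "\<And>i. ((\<lambda>s. f s $ i) has_vector_derivative f' $ i) F"
  shows "(f has_vector_derivative f') F"
proof -
  have expand: "y = (\<Sum>i\<in>UNIV. axis i (y $ i))" for y :: "'a ^ 'n"
    by (simp add: vec_eq_iff axis_def if_distrib cong: if_cong)
  have "((\<lambda>s. \<Sum>i\<in>UNIV. axis i (f s $ i)) has_vector_derivative (\<Sum>i\<in>UNIV. axis i (f' $ i))) F"
    by (intro has_vector_derivative_sum bounded_linear.has_vector_derivative[OF bounded_linear_axis] assms)
  then show ?thesis
    by (simp only: expand[symmetric])
qed

lemma exp_decay_of_differential_inequality:
  fixes V V' :: "real \<Rightarrow> real"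
  assumes deriv: "\<And>t. t \<ge> 0 \<Longrightarrow> (V has_real_derivative V' t) (at t within {0..})"
    and decay: "\<And>t. t \<ge> 0 \<Longrightarrow> V' t \<le> - \<beta> * V t"
    and t: "t \<ge> 0"
  shows "V t \<le> exp (- \<beta> * t) * V 0"
proof -
  define W where "W s = exp (\<beta> * s) * V s" for s
  have W_deriv: "(W has_real_derivative exp (\<beta> * s) * (\<beta> * V s + V' s)) (at s within {0..})"
    if "s \<ge> 0" for s
    unfolding W_def by (rule derivative_eq_intros deriv[OF that] refl | simp add: algebra_simps)+
  have "W t \<le> W 0"
  proof (rule DERIV_nonpos_imp_decreasing_open[OF t])
    fix s assume s: "0 < s" "s < t"
    have "at s within {0..} = at s"
      using s by (intro at_within_interior) simp
    then have "(W has_real_derivative exp (\<beta> * s) * (\<beta> * V s + V' s)) (at s)"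
      using W_deriv[of s] s by simp
    moreover have "exp (\<beta> * s) * (\<beta> * V s + V' s) \<le> 0"
      using decay[of s] s by (intro mult_nonneg_nonpos) auto
    ultimately show "\<exists>y. (W has_real_derivative y) (at s) \<and> y \<le> 0" by blast
  next
    have "continuous (at s within {0..t}) W" if "s \<in> {0..t}" for s
    proof -
      have "continuous (at s within {0..}) W"
        using W_deriv[of s] that by (auto intro: DERIV_continuous)
      then show ?thesis
        by (rule continuous_within_subset) auto
    qed
    then show "continuous_on {0..t} W"
      unfolding continuous_on_eq_continuous_within by blast
  qed
  then have "exp (- \<beta> * t) * (exp (\<beta> * t) * V t) \<le> exp (- \<beta> * t) * V 0"
    by (simp add: W_def)
  then show ?thesis
    by (simp add: exp_minus field_simps)
qed

lemma exp_bound_tendsto_0: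
  fixes f h :: "real \<Rightarrow> 'a::real_normed_vector"
  assumes "\<alpha> > 0" and bound: "\<And>t. t \<ge> 0 \<Longrightarrow> norm (f t) + norm (h t) \<le> C * exp (- \<alpha> * t)"
  shows "(f \<longlongrightarrow> 0) at_top" and "(h \<longlongrightarrow> 0) at_top"
proof -
  have "filterlim (\<lambda>t. - \<alpha> * t) at_bot at_top"
    using \<open>\<alpha> > 0\<close> by (intro filterlim_tendsto_neg_mult_at_bot[OF tendsto_const] filterlim_ident) auto
  then have decay: "((\<lambda>t. C * exp (- \<alpha> * t)) \<longlongrightarrow> 0) at_top"
    by (intro tendsto_mult_right_zero filterlim_compose[OF exp_at_bot])
  have "\<forall>\<^sub>F t in at_top. norm (f t) \<le> C * exp (- \<alpha> * t)"
    "\<forall>\<^sub>F t in at_top. norm (h t) \<le> C * exp (- \<alpha> * t)"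
    using eventually_ge_at_top[of 0]
    by (eventually_elim, use bound norm_ge_zero in \<open>fastforce intro: order_trans[rotated]\<close>)+
  then show "(f \<longlongrightarrow> 0) at_top" "(h \<longlongrightarrow> 0) at_top"
    using Lim_null_comparison[OF _ decay] by blast+
qed

lemma sum_le_of_sum_squares_le:
  fixes a b a0 b0 m K \<beta> t :: real
  assumes "0 \<le> a" "0 \<le> b" "0 \<le> a0" "0 \<le> b0" "m > 0" "K > 0"
    and squares: "m * (a\<^sup>2 + b\<^sup>2) \<le> exp (- \<beta> * t) * (K * (a0\<^sup>2 + b0\<^sup>2))"
  shows "a + b \<le> sqrt (2 * K / m) * exp (- (\<beta> / 2) * t) * (a0 + b0)"
proof (rule power2_le_imp_le)
  have "(a + b)\<^sup>2 \<le> 2 * (a\<^sup>2 + b\<^sup>2)"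
    using sum_power2_ge_zero[of "a - b" 0] by (simp add: power2_eq_square algebra_simps)
  also have "\<dots> \<le> 2 * K / m * exp (- \<beta> * t) * (a0\<^sup>2 + b0\<^sup>2)"
    using squares \<open>m > 0\<close> by (simp add: field_simps)
  also have "\<dots> \<le> 2 * K / m * exp (- \<beta> * t) * (a0 + b0)\<^sup>2"
    using assms by (intro mult_left_mono) (auto simp: power2_eq_square algebra_simps)
  also have "\<dots> = (sqrt (2 * K / m) * exp (- (\<beta> / 2) * t) * (a0 + b0))\<^sup>2"
  proof -
    have "exp (- \<beta> * t) = (exp (- (\<beta> / 2) * t))\<^sup>2"
      by (simp add: power2_eq_square flip: exp_add)
    moreover have "(sqrt (2 * K / m))\<^sup>2 = 2 * K / m"
      using assms by simp
    ultimately show ?thesis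
      by (simp only: power_mult_distrib)
  qed
  finally show "(a + b)\<^sup>2 \<le> (sqrt (2 * K / m) * exp (- (\<beta> / 2) * t) * (a0 + b0))\<^sup>2" .
qed (use assms in auto)

lemma quadratic_form_coercive:
  fixes L :: "'a::euclidean_space \<Rightarrow> 'a" and W :: "'a set"
  assumes lin: "linear L" and closed: "closed W" and cone: "\<And>x c. x \<in> W \<Longrightarrow> c *\<^sub>R x \<in> W"
    and pos: "\<And>x. x \<in> W \<Longrightarrow> x \<noteq> 0 \<Longrightarrow> x \<bullet> L x > 0"
  shows "\<exists>\<mu>>0. \<forall>x\<in>W. \<mu> * (norm x)\<^sup>2 \<le> x \<bullet> L x"
proof -
  define S where "S = W \<inter> sphere 0 1"
  have scale: "(c *\<^sub>R x) \<bullet> L (c *\<^sub>R x) = c\<^sup>2 * (x \<bullet> L x)" for c x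
    using linear_scale[OF lin, of c x] by (simp add: power2_eq_square)
  have normalize: "(1 / norm x) *\<^sub>R x \<in> S" if "x \<in> W" "x \<noteq> 0" for x
    using cone[OF that(1)] that(2) by (simp add: S_def)
  obtain \<mu> where \<mu>: "\<mu> > 0" and min: "\<And>y. y \<in> S \<Longrightarrow> \<mu> \<le> y \<bullet> L y"
  proof (cases "S = {}")
    case True
    then show thesis
      using that[of 1] by simp
  next
    case False
    have "compact S"
      unfolding S_def using closed by (intro closed_Int_compact) auto
    moreover have "continuous_on S (\<lambda>x. x \<bullet> L x)"
      using lin by (intro continuous_intros linear_continuous_on) (simp add: linear_conv_bounded_linear)
    ultimately obtain x0 where "x0 \<in> S" and "\<And>y. y \<in> S \<Longrightarrow> x0 \<bullet> L x0 \<le> y \<bullet> L y"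
      using continuous_attains_inf[OF _ False] by blast
    moreover have "x0 \<bullet> L x0 > 0"
      using \<open>x0 \<in> S\<close> by (intro pos) (auto simp: S_def)
    ultimately show thesis
      using that by blast
  qed
  have "\<mu> * (norm x)\<^sup>2 \<le> x \<bullet> L x" if "x \<in> W" for x
  proof (cases "x = 0")
    case False
    have "\<mu> \<le> (1 / norm x)\<^sup>2 * (x \<bullet> L x)"
      using min[OF normalize[OF that False]] by (simp only: scale)
    then have "(norm x)\<^sup>2 * \<mu> \<le> (norm x)\<^sup>2 * ((1 / norm x)\<^sup>2 * (x \<bullet> L x))"
      by (intro mult_left_mono) auto
    then show ?thesis
      using False by (simp add: power2_eq_square field_simps)
  qed (simp add: linear_0[OF lin])
  then show ?thesis
    using \<mu> by blast
qed

section \<open>Exponential stability of the PI error dynamics\<close>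

locale PI_error_system =
  fixes kP kI \<mu> M :: real and L :: "'a::real_inner \<Rightarrow> 'a" and \<delta> e :: "real \<Rightarrow> 'a"
  assumes kP_pos: "kP > 0" and kI_pos: "kI > 0" and \<mu>_pos: "\<mu> > 0" and M_pos: "M > 0"
    and L_bounded_linear: "bounded_linear L"
    and L_self_adjoint: "\<And>x y. L x \<bullet> y = x \<bullet> L y"
    and L_norm_le: "\<And>x. norm (L x) \<le> M * norm x"
    and L_coercive: "\<And>t. t \<ge> 0 \<Longrightarrow> \<mu> * (norm (\<delta> t))\<^sup>2 \<le> \<delta> t \<bullet> L (\<delta> t)"
    and \<delta>_deriv: "\<And>t. t \<ge> 0 \<Longrightarrow>
      (\<delta> has_vector_derivative - kP *\<^sub>R L (\<delta> t) - kI *\<^sub>R e t) (at t within {0..})"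
    and e_deriv: "\<And>t. t \<ge> 0 \<Longrightarrow> (e has_vector_derivative L (\<delta> t)) (at t within {0..})"
begin

text \<open>The cross term \<open>\<epsilon> \<delta>\<bullet>e\<close> is what makes the derivative strictly negative in \<open>e\<close>.\<close>

definition lyapunov :: "real \<Rightarrow> real \<Rightarrow> real" where
  "lyapunov \<epsilon> t = \<delta> t \<bullet> L (\<delta> t) + kI * (e t \<bullet> e t) + \<epsilon> * (\<delta> t \<bullet> e t)"

definition lyapunov_deriv :: "real \<Rightarrow> real \<Rightarrow> real" where
  "lyapunov_deriv \<epsilon> t = - 2 * kP * (norm (L (\<delta> t)))\<^sup>2 + \<epsilon> * (\<delta> t \<bullet> L (\<delta> t))
     - \<epsilon> * kP * (L (\<delta> t) \<bullet> e t) - \<epsilon> * kI * (norm (e t))\<^sup>2"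

lemma lyapunov_has_derivative:
  assumes t: "t \<ge> 0"
  shows "(lyapunov \<epsilon> has_real_derivative lyapunov_deriv \<epsilon> t) (at t within {0..})"
proof -
  define d where "d = - kP *\<^sub>R L (\<delta> t) - kI *\<^sub>R e t"
  have L_deriv: "((\<lambda>s. L (\<delta> s)) has_vector_derivative L d) (at t within {0..})"
    unfolding d_def by (rule bounded_linear.has_vector_derivative[OF L_bounded_linear \<delta>_deriv[OF t]])
  note inner_deriv = bounded_bilinear.has_vector_derivative[OF bounded_bilinear_inner]
  have "(lyapunov \<epsilon> has_vector_derivative
      (\<delta> t \<bullet> L d + d \<bullet> L (\<delta> t)) + kI * (e t \<bullet> L (\<delta> t) + L (\<delta> t) \<bullet> e t)
        + \<epsilon> * (\<delta> t \<bullet> L (\<delta> t) + d \<bullet> e t)) (at t within {0..})"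
    unfolding lyapunov_def[abs_def] d_def
    by (intro has_vector_derivative_add has_vector_derivative_mult_right inner_deriv
        \<delta>_deriv[OF t] e_deriv[OF t] L_deriv[unfolded d_def])
  moreover have "(\<delta> t \<bullet> L d + d \<bullet> L (\<delta> t)) + kI * (e t \<bullet> L (\<delta> t) + L (\<delta> t) \<bullet> e t)
        + \<epsilon> * (\<delta> t \<bullet> L (\<delta> t) + d \<bullet> e t) = lyapunov_deriv \<epsilon> t"
    unfolding L_self_adjoint[symmetric, of "\<delta> t" d]
    by (simp add: lyapunov_deriv_def d_def inner_diff_left inner_diff_right power2_norm_eq_inner
        inner_commute[of "e t" "L (\<delta> t)"] algebra_simps)
  ultimately show ?thesis
    unfolding has_real_derivative_iff_has_vector_derivative by simp
qed

lemma inner_L_le: "x \<bullet> L x \<le> M * (norm x)\<^sup>2"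
proof -
  have "x \<bullet> L x \<le> norm x * norm (L x)"
    by (rule norm_cauchy_schwarz)
  also have "\<dots> \<le> norm x * (M * norm x)"
    by (intro mult_left_mono L_norm_le) simp
  finally show ?thesis
    by (simp add: power2_eq_square algebra_simps)
qed

lemma lyapunov_le:
  assumes "\<epsilon> \<ge> 0"
  shows "lyapunov \<epsilon> t \<le> (M + kI + \<epsilon>) * ((norm (\<delta> t))\<^sup>2 + (norm (e t))\<^sup>2)"
proof -
  have "\<delta> t \<bullet> e t \<le> norm (\<delta> t) * norm (e t)"
    by (rule norm_cauchy_schwarz)
  also have "\<dots> \<le> (norm (\<delta> t))\<^sup>2 + (norm (e t))\<^sup>2"
  proof -
    have "2 * (norm (\<delta> t) * norm (e t)) \<le> (norm (\<delta> t))\<^sup>2 + (norm (e t))\<^sup>2"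
      using sum_power2_ge_zero[of "norm (\<delta> t) - norm (e t)" 0]
      by (simp add: power2_eq_square algebra_simps)
    moreover have "0 \<le> norm (\<delta> t) * norm (e t)"
      by simp
    ultimately show ?thesis
      by linarith
  qed
  finally have "\<epsilon> * (\<delta> t \<bullet> e t) \<le> \<epsilon> * ((norm (\<delta> t))\<^sup>2 + (norm (e t))\<^sup>2)"
    using assms by (rule mult_left_mono)
  moreover have "0 \<le> M * (norm (e t))\<^sup>2 + kI * (norm (\<delta> t))\<^sup>2"
    using M_pos kI_pos by simp
  ultimately show ?thesis
    using inner_L_le[of "\<delta> t"]
    unfolding lyapunov_def power2_norm_eq_inner[symmetric] by (simp add: algebra_simps)
qed

lemma lyapunov_ge:
  assumes t: "t \<ge> 0" and \<epsilon>: "0 \<le> \<epsilon>" "\<epsilon> \<le> min \<mu> kI"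
  shows "min \<mu> kI / 2 * ((norm (\<delta> t))\<^sup>2 + (norm (e t))\<^sup>2) \<le> lyapunov \<epsilon> t"
proof -
  define a b where "a = norm (\<delta> t)" and "b = norm (e t)"
  have "- (\<delta> t \<bullet> e t) \<le> a * b"
    using norm_cauchy_schwarz[of "- \<delta> t" "e t"] by (simp add: a_def b_def)
  also have "\<dots> \<le> (a\<^sup>2 + b\<^sup>2) / 2"
    using sum_power2_ge_zero[of "a - b" 0] by (simp add: power2_eq_square algebra_simps)
  finally have cross: "- \<epsilon> * (\<delta> t \<bullet> e t) \<le> \<epsilon> / 2 * (a\<^sup>2 + b\<^sup>2)"
    using mult_left_mono[OF _ \<epsilon>(1)] by fastforce
  have "(min \<mu> kI / 2 + \<epsilon> / 2) * a\<^sup>2 \<le> \<mu> * a\<^sup>2" "(min \<mu> kI / 2 + \<epsilon> / 2) * b\<^sup>2 \<le> kI * b\<^sup>2"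
    using \<epsilon> by (auto intro!: mult_right_mono)
  then show ?thesis
    using cross L_coercive[OF t]
    by (simp add: lyapunov_def a_def b_def power2_norm_eq_inner[symmetric] algebra_simps)
qed

lemma lyapunov_deriv_le:
  assumes t: "t \<ge> 0" and \<epsilon>: "0 \<le> \<epsilon>" "\<epsilon> * (M + kP\<^sup>2 * M\<^sup>2 / (2 * kI)) \<le> kP * \<mu>\<^sup>2"
  shows "lyapunov_deriv \<epsilon> t \<le> - min (kP * \<mu>\<^sup>2) (\<epsilon> * kI / 2) * ((norm (\<delta> t))\<^sup>2 + (norm (e t))\<^sup>2)"
proof -
  define a b where "a = norm (\<delta> t)" and "b = norm (e t)"
  have a: "a \<ge> 0" and b: "b \<ge> 0"
    by (simp_all add: a_def b_def)
  have "\<mu> * a\<^sup>2 \<le> a * norm (L (\<delta> t))"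
    using L_coercive[OF t] norm_cauchy_schwarz[of "\<delta> t" "L (\<delta> t)"] by (simp add: a_def)
  then have "\<mu> * a \<le> norm (L (\<delta> t))"
    using a by (cases "a = 0") (auto simp: power2_eq_square)
  then have "(\<mu> * a)\<^sup>2 \<le> (norm (L (\<delta> t)))\<^sup>2"
    using \<mu>_pos a by (intro power_mono) auto
  then have L_sq: "- 2 * kP * (norm (L (\<delta> t)))\<^sup>2 \<le> - 2 * kP * \<mu>\<^sup>2 * a\<^sup>2"
    using kP_pos by (simp add: power_mult_distrib)
  have "- (L (\<delta> t) \<bullet> e t) \<le> norm (L (\<delta> t)) * b"
    using norm_cauchy_schwarz[of "- L (\<delta> t)" "e t"] by (simp add: b_def)
  also have "\<dots> \<le> M * a * b"
    using L_norm_le[of "\<delta> t"] b by (simp add: a_def mult_right_mono)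
  finally have "kP * (- (L (\<delta> t) \<bullet> e t)) \<le> kP * (M * a * b)"
    using kP_pos by (intro mult_left_mono) auto
  also have "\<dots> \<le> kP\<^sup>2 * M\<^sup>2 / (2 * kI) * a\<^sup>2 + kI / 2 * b\<^sup>2"
  proof -
    have "2 * kI * (kP * (M * a * b)) \<le> kP\<^sup>2 * M\<^sup>2 * a\<^sup>2 + kI\<^sup>2 * b\<^sup>2"
      using sum_power2_ge_zero[of "kP * M * a - kI * b" 0] by (simp add: power2_eq_square algebra_simps)
    then show ?thesis
      using kI_pos by (simp add: field_simps power2_eq_square)
  qed
  finally have cross: "- \<epsilon> * kP * (L (\<delta> t) \<bullet> e t) \<le> \<epsilon> * (kP\<^sup>2 * M\<^sup>2 / (2 * kI) * a\<^sup>2 + kI / 2 * b\<^sup>2)"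
    using mult_left_mono[OF _ \<epsilon>(1)] by fastforce
  have "\<epsilon> * (\<delta> t \<bullet> L (\<delta> t)) \<le> \<epsilon> * (M * a\<^sup>2)"
    using inner_L_le[of "\<delta> t"] \<epsilon>(1) by (simp add: a_def mult_left_mono)
  then have "lyapunov_deriv \<epsilon> t
      \<le> - 2 * kP * \<mu>\<^sup>2 * a\<^sup>2 + \<epsilon> * (M + kP\<^sup>2 * M\<^sup>2 / (2 * kI)) * a\<^sup>2 - \<epsilon> * kI / 2 * b\<^sup>2"
    using L_sq cross by (simp add: lyapunov_deriv_def b_def[symmetric] algebra_simps)
  also have "\<dots> \<le> - (kP * \<mu>\<^sup>2) * a\<^sup>2 - (\<epsilon> * kI / 2) * b\<^sup>2"
    using mult_right_mono[OF \<epsilon>(2), of "a\<^sup>2"] by (simp add: algebra_simps)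
  also have "\<dots> \<le> - min (kP * \<mu>\<^sup>2) (\<epsilon> * kI / 2) * (a\<^sup>2 + b\<^sup>2)"
  proof -
    have "min (kP * \<mu>\<^sup>2) (\<epsilon> * kI / 2) * a\<^sup>2 \<le> kP * \<mu>\<^sup>2 * a\<^sup>2"
      "min (kP * \<mu>\<^sup>2) (\<epsilon> * kI / 2) * b\<^sup>2 \<le> \<epsilon> * kI / 2 * b\<^sup>2"
      by (intro mult_right_mono; simp)+
    then show ?thesis
      by (simp add: distrib_left)
  qed
  finally show ?thesis
    by (simp add: a_def b_def)
qed

lemma lyapunov_decay:
  assumes t: "t \<ge> 0" and \<epsilon>: "0 \<le> \<epsilon>" "\<epsilon> * (M + kP\<^sup>2 * M\<^sup>2 / (2 * kI)) \<le> kP * \<mu>\<^sup>2"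
  shows "lyapunov \<epsilon> t \<le> exp (- (min (kP * \<mu>\<^sup>2) (\<epsilon> * kI / 2) / (M + kI + \<epsilon>)) * t) * lyapunov \<epsilon> 0"
proof (rule exp_decay_of_differential_inequality[OF lyapunov_has_derivative _ t])
  fix s :: real assume s: "s \<ge> 0"
  define r K where "r = min (kP * \<mu>\<^sup>2) (\<epsilon> * kI / 2)" and "K = M + kI + \<epsilon>"
  have "r \<ge> 0" "K > 0"
    using kP_pos kI_pos M_pos \<epsilon> by (simp_all add: r_def K_def)
  have "lyapunov_deriv \<epsilon> s \<le> - r * ((norm (\<delta> s))\<^sup>2 + (norm (e s))\<^sup>2)"
    unfolding r_def by (rule lyapunov_deriv_le[OF s \<epsilon>])
  also have "\<dots> \<le> - (r / K) * lyapunov \<epsilon> s"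
    using mult_left_mono[OF lyapunov_le[OF \<epsilon>(1), of s, folded K_def], of "r / K"] \<open>r \<ge> 0\<close> \<open>K > 0\<close>
    by simp
  finally show "lyapunov_deriv \<epsilon> s \<le> - (r / K) * lyapunov \<epsilon> s" .
qed

end

lemma PI_error_exponential_bound:
  fixes kP kI \<mu> M :: real
  assumes "kP > 0" "kI > 0" "\<mu> > 0" "M > 0"
  obtains c \<alpha> where "c > 0" "\<alpha> > 0"
    and "\<And>(L :: 'a::real_inner \<Rightarrow> 'a) \<delta> e t. PI_error_system kP kI \<mu> M L \<delta> e \<Longrightarrow> t \<ge> 0 \<Longrightarrow>
      norm (\<delta> t) + norm (e t) \<le> c * exp (- \<alpha> * t) * (norm (\<delta> 0) + norm (e 0))"
proof -
  define Q where "Q = M + kP\<^sup>2 * M\<^sup>2 / (2 * kI)"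
  define \<epsilon> where "\<epsilon> = min (min \<mu> kI) (kP * \<mu>\<^sup>2 / Q)"
  define m K \<beta> where "m = min \<mu> kI / 2" and "K = M + kI + \<epsilon>"
    and "\<beta> = min (kP * \<mu>\<^sup>2) (\<epsilon> * kI / 2) / K"
  have "Q > 0"
    using assms unfolding Q_def by (intro add_pos_nonneg) auto
  have "\<epsilon> \<le> kP * \<mu>\<^sup>2 / Q"
    unfolding \<epsilon>_def by (rule min.cobounded2)
  then have "\<epsilon> * Q \<le> kP * \<mu>\<^sup>2"
    using \<open>Q > 0\<close> by (simp add: pos_le_divide_eq)
  moreover have "\<epsilon> \<le> min \<mu> kI"
    unfolding \<epsilon>_def by (rule min.cobounded1)
  moreover have "\<epsilon> > 0"
    using assms \<open>Q > 0\<close> by (simp add: \<epsilon>_def)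
  ultimately have \<epsilon>: "\<epsilon> > 0" "\<epsilon> \<le> min \<mu> kI" "\<epsilon> * Q \<le> kP * \<mu>\<^sup>2"
    by simp_all
  have "m > 0" "K > 0" "\<beta> > 0"
    using assms \<epsilon> by (simp_all add: m_def K_def \<beta>_def)
  show thesis
  proof (rule that[of "sqrt (2 * K / m)" "\<beta> / 2"])
    fix L :: "'a \<Rightarrow> 'a" and \<delta> e and t :: real
    assume "PI_error_system kP kI \<mu> M L \<delta> e" and t: "t \<ge> 0"
    then interpret PI_error_system kP kI \<mu> M L \<delta> e
      by simp
    have "m * ((norm (\<delta> t))\<^sup>2 + (norm (e t))\<^sup>2) \<le> lyapunov \<epsilon> t"
      unfolding m_def using lyapunov_ge[OF t] \<epsilon> by simp
    also have "\<dots> \<le> exp (- \<beta> * t) * lyapunov \<epsilon> 0"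
      unfolding \<beta>_def K_def using lyapunov_decay[OF t] \<epsilon> by (simp add: Q_def)
    also have "\<dots> \<le> exp (- \<beta> * t) * (K * ((norm (\<delta> 0))\<^sup>2 + (norm (e 0))\<^sup>2))"
      unfolding K_def using lyapunov_le \<epsilon> by (simp add: mult_left_mono)
    finally show "norm (\<delta> t) + norm (e t) \<le> sqrt (2 * K / m) * exp (- (\<beta> / 2) * t) * (norm (\<delta> 0) + norm (e 0))"
      by (rule sum_le_of_sum_squares_le[rotated 6]) (use \<open>m > 0\<close> \<open>K > 0\<close> in auto)
  qed (use \<open>m > 0\<close> \<open>K > 0\<close> \<open>\<beta> > 0\<close> in auto)
qed

section \<open>The bearing Laplacian\<close>

lemma proj_self_adjoint: "proj g u \<bullet> w = u \<bullet> proj g w"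
  by (simp add: proj_def inner_diff_left inner_diff_right inner_commute algebra_simps)

lemma inner_proj_proj: "proj g u \<bullet> proj g u = u \<bullet> proj g u"
proof (cases "g = 0")
  case False
  then have "g \<bullet> g \<noteq> 0"
    by simp
  then show ?thesis
    by (simp add: proj_def inner_diff_left inner_diff_right inner_commute power2_eq_square field_simps)
qed (simp add: proj_def)

lemma proj_inner_self: "proj g u \<bullet> u = (norm (proj g u))\<^sup>2"
  by (metis power2_norm_eq_inner inner_proj_proj inner_commute)

lemma proj_inner_commute: "proj g u \<bullet> w = proj g w \<bullet> u"
  by (metis proj_self_adjoint inner_commute)

lemma proj_uminus: "proj (- g) = proj g"
  by (rule ext) (simp add: proj_def)

lemma linear_proj: "linear (proj g)"
  by (rule linearI) (simp_all add: proj_def inner_add_right algebra_simps add_divide_distrib scaleR_add_left)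

lemma proj_eq_0_imp: "proj g w = 0 \<Longrightarrow> w = ((g \<bullet> w) / (g \<bullet> g)) *\<^sub>R g"
  by (simp add: proj_def)

lemma fol_fol [simp]: "fol VL (fol VL x) = fol VL x"
  and lead_lead [simp]: "lead VL (lead VL x) = lead VL x"
  and fol_lead [simp]: "fol VL (lead VL x) = 0"
  and lead_fol [simp]: "lead VL (fol VL x) = 0"
  by (simp_all add: fol_def lead_def vec_eq_iff)

lemma fol_add_lead: "fol VL x + lead VL x = x"
  by (simp add: fol_def lead_def vec_eq_iff)

lemma linear_fol: "linear (fol VL)"
  and linear_lead: "linear (lead VL)"
  by (rule linearI; simp add: fol_def lead_def vec_eq_iff)+

lemma fol_0 [simp]: "fol VL 0 = 0"
  and fol_add [simp]: "fol VL (a + b) = fol VL a + fol VL b"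
  and fol_diff [simp]: "fol VL (a - b) = fol VL a - fol VL b"
  and fol_scaleR [simp]: "fol VL (c *\<^sub>R a) = c *\<^sub>R fol VL a"
  by (simp_all add: fol_def vec_eq_iff)

lemma lead_0 [simp]: "lead VL 0 = 0"
  and lead_add [simp]: "lead VL (a + b) = lead VL a + lead VL b"
  by (simp_all add: lead_def vec_eq_iff)

lemma inner_fol: "fol VL x \<bullet> y = x \<bullet> fol VL y"
  unfolding inner_vec_def fol_def by (intro sum.cong) auto

lemma linear_bearing_lap:
  fixes E :: "'n::finite \<Rightarrow> 'n \<Rightarrow> bool" and g :: "'n \<Rightarrow> 'n \<Rightarrow> real^'d::finite"
  shows "linear (bearing_lap E g)"
proof (rule linearI)
  fix x y :: "real^'d^'n"
  have "proj h (a + b - (c + d)) = proj h (a - c) + proj h (b - d)" for h a b c d :: "real^'d"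
    using linear_add[OF linear_proj, of h "a - c" "b - d"] by (simp add: algebra_simps)
  then show "bearing_lap E g (x + y) = bearing_lap E g x + bearing_lap E g y"
    unfolding bearing_lap_def by (simp add: vec_eq_iff sum.distrib)
next
  fix c :: real and x :: "real^'d^'n"
  have "proj h (c *\<^sub>R a - c *\<^sub>R b) = c *\<^sub>R proj h (a - b)" for h a b :: "real^'d"
    using linear_scale[OF linear_proj, of h c "a - b"] by (simp add: algebra_simps)
  then show "bearing_lap E g (c *\<^sub>R x) = c *\<^sub>R bearing_lap E g x"
    unfolding bearing_lap_def by (simp add: vec_eq_iff scaleR_sum_right)
qed

locale bearing_graph =
  fixes E :: "'n::finite \<Rightarrow> 'n \<Rightarrow> bool" and g :: "'n \<Rightarrow> 'n \<Rightarrow> real^'d::finite"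
  assumes undirected: "undirected_graph E"
    and proj_swap: "\<And>i j. E i j \<Longrightarrow> proj (g j i) = proj (g i j)"
begin

lemma edge_sym: "E i j \<Longrightarrow> E j i"
  using undirected by (simp add: undirected_graph_def)

lemma bearing_lap_inner_eq_edge_sum:
  "2 * (bearing_lap E g u \<bullet> w) =
     (\<Sum>i\<in>UNIV. \<Sum>j\<in>UNIV. if E i j then proj (g i j) (u$i - u$j) \<bullet> (w$i - w$j) else 0)"
proof -
  define f where "f i j = (if E i j then proj (g i j) (u$i - u$j) \<bullet> w$i else 0)" for i j
  have "bearing_lap E g u \<bullet> w = (\<Sum>i\<in>UNIV. bearing_lap E g u $ i \<bullet> w $ i)"
    by (rule inner_vec_def)
  also have "\<dots> = (\<Sum>i\<in>UNIV. \<Sum>j\<in>UNIV. f i j)"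
    by (simp add: bearing_lap_def f_def inner_sum_left sum.If_cases)
  finally have "2 * (bearing_lap E g u \<bullet> w) = (\<Sum>i\<in>UNIV. \<Sum>j\<in>UNIV. f i j) + (\<Sum>i\<in>UNIV. \<Sum>j\<in>UNIV. f j i)"
    using sum.swap[of f UNIV UNIV] by simp
  also have "\<dots> = (\<Sum>i\<in>UNIV. \<Sum>j\<in>UNIV. f i j + f j i)"
    by (simp add: sum.distrib)
  also have "\<dots> = (\<Sum>i\<in>UNIV. \<Sum>j\<in>UNIV. if E i j then proj (g i j) (u$i - u$j) \<bullet> (w$i - w$j) else 0)"
  proof (intro sum.cong refl)
    fix i j
    have "proj (g i j) (u$j - u$i) = - proj (g i j) (u$i - u$j)"
      using linear_neg[OF linear_proj, of "g i j" "u$i - u$j"] by simp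
    then have "f j i = (if E i j then - (proj (g i j) (u$i - u$j) \<bullet> w$j) else 0)"
      using edge_sym[of i j] edge_sym[of j i] proj_swap[of i j]
      by (auto simp: f_def)
    then show "f i j + f j i = (if E i j then proj (g i j) (u$i - u$j) \<bullet> (w$i - w$j) else 0)"
      by (simp add: f_def inner_diff_right)
  qed
  finally show ?thesis .
qed

lemma bearing_lap_self_adjoint: "bearing_lap E g u \<bullet> w = u \<bullet> bearing_lap E g w"
proof -
  have "2 * (bearing_lap E g u \<bullet> w) = 2 * (bearing_lap E g w \<bullet> u)"
    unfolding bearing_lap_inner_eq_edge_sum
    by (intro sum.cong refl) (simp add: proj_inner_commute)
  then show ?thesis
    by (simp add: inner_commute)
qed

lemma bearing_lap_quadratic:
  "2 * (x \<bullet> bearing_lap E g x) =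
     (\<Sum>i\<in>UNIV. \<Sum>j\<in>UNIV. if E i j then (norm (proj (g i j) (x$i - x$j)))\<^sup>2 else 0)"
  unfolding inner_commute[of x] bearing_lap_inner_eq_edge_sum
  by (intro sum.cong refl) (simp add: proj_inner_self)

lemma bearing_lap_quadratic_nonneg: "0 \<le> x \<bullet> bearing_lap E g x"
proof -
  have "0 \<le> 2 * (x \<bullet> bearing_lap E g x)"
    unfolding bearing_lap_quadratic by (intro sum_nonneg) auto
  then show ?thesis
    by simp
qed

lemma bearing_lap_quadratic_eq_0:
  assumes "x \<bullet> bearing_lap E g x = 0" and "E i j"
  shows "proj (g i j) (x$i - x$j) = 0"
proof -
  define h where "h i j = (if E i j then (norm (proj (g i j) (x$i - x$j)))\<^sup>2 else 0)" for i j
  have h_nonneg: "0 \<le> h i j" for i j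
    by (simp add: h_def)
  have "(\<Sum>i\<in>UNIV. \<Sum>j\<in>UNIV. h i j) = 0"
    using assms(1) bearing_lap_quadratic[of x] by (simp add: h_def)
  then have "(\<Sum>j\<in>UNIV. h i j) = 0"
    by (simp add: sum_nonneg_eq_0_iff sum_nonneg h_nonneg)
  then have "h i j = 0"
    by (simp add: sum_nonneg_eq_0_iff h_nonneg)
  then show ?thesis
    using assms(2) by (simp add: h_def)
qed

end

section \<open>Bearing rigidity and the follower block\<close>

lemma target_formation_bearing_graph:
  assumes "target_formation E g VL pl q" and "undirected_graph E"
  shows "bearing_graph E g"
proof
  fix i j assume "E i j"
  then have "E j i"
    using assms(2) by (simp add: undirected_graph_def)
  have "g j i = (1 / norm (q$i - q$j)) *\<^sub>R (q$i - q$j)"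
    using assms(1) \<open>E j i\<close> by (simp add: target_formation_def)
  also have "\<dots> = - ((1 / norm (q$j - q$i)) *\<^sub>R (q$j - q$i))"
    by (simp add: norm_minus_commute algebra_simps)
  also have "\<dots> = - g i j"
    using assms(1) \<open>E i j\<close> by (simp add: target_formation_def)
  finally show "proj (g j i) = proj (g i j)"
    by (simp add: proj_uminus)
qed (fact assms(2))

lemma target_formation_proj_eq_0_imp_parallel:
  assumes "target_formation E g VL pl q" and "E i j" and "proj (g i j) (x$i - x$j) = 0"
  shows "\<exists>b. x$j - x$i = b *\<^sub>R (q$j - q$i)"
proof -
  have g: "g i j = (1 / norm (q$j - q$i)) *\<^sub>R (q$j - q$i)"
    using assms(1,2) by (simp add: target_formation_def)
  define c where "c = (g i j \<bullet> (x$i - x$j)) / (g i j \<bullet> g i j)"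
  have "x$i - x$j = c *\<^sub>R g i j"
    using proj_eq_0_imp[OF assms(3)] by (simp add: c_def)
  then have "x$j - x$i = (- c / norm (q$j - q$i)) *\<^sub>R (q$j - q$i)"
    by (simp add: g algebra_simps)
  then show ?thesis
    by blast
qed

text \<open>For small \<open>h\<close> every edge vector of \<open>q + h x\<close> is a positive multiple
  \<open>(1 + h \<beta>\<^sub>i\<^sub>j) (q\<^sub>j - q\<^sub>i)\<close> of the corresponding edge vector of \<open>q\<close>.\<close>

lemma bearing_fun_eventually_eq:
  fixes q x :: "real^'d::finite^'n::finite"
  assumes "\<And>i j. E i j \<Longrightarrow> x$j - x$i = \<beta> i j *\<^sub>R (q$j - q$i)"
  shows "\<forall>\<^sub>F h in at 0. bearing_fun E (q + h *\<^sub>R x) = bearing_fun E q"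
proof -
  have "\<forall>\<^sub>F h in at 0. \<forall>e::'n \<times> 'n. 1 + h * \<beta> (fst e) (snd e) > 0"
  proof (rule eventually_all_finite)
    fix e :: "'n \<times> 'n"
    have "((\<lambda>h::real. 1 + h * \<beta> (fst e) (snd e)) \<longlongrightarrow> 1 + 0 * \<beta> (fst e) (snd e)) (at 0)"
      by (intro tendsto_intros)
    then show "\<forall>\<^sub>F h in at 0. 1 + h * \<beta> (fst e) (snd e) > 0"
      by (rule order_tendstoD(1)) simp
  qed
  then show ?thesis
  proof (rule eventually_mono)
    fix h :: real
    assume pos: "\<forall>e::'n \<times> 'n. 1 + h * \<beta> (fst e) (snd e) > 0"
    have "(1 / norm ((q + h *\<^sub>R x)$j - (q + h *\<^sub>R x)$i)) *\<^sub>R ((q + h *\<^sub>R x)$j - (q + h *\<^sub>R x)$i)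
        = (1 / norm (q$j - q$i)) *\<^sub>R (q$j - q$i)" if "E i j" for i j
    proof -
      have "(q + h *\<^sub>R x)$j - (q + h *\<^sub>R x)$i = (q$j - q$i) + h *\<^sub>R (x$j - x$i)"
        by (simp add: algebra_simps)
      also have "\<dots> = (1 + h * \<beta> i j) *\<^sub>R (q$j - q$i)"
        unfolding assms[OF that] by (simp add: algebra_simps)
      finally show ?thesis
        using pos[rule_format, of "(i, j)"] by simp
    qed
    then have "(\<lambda>e. if E (fst e) (snd e) then (1 / norm ((q + h *\<^sub>R x)$snd e - (q + h *\<^sub>R x)$fst e))
          *\<^sub>R ((q + h *\<^sub>R x)$snd e - (q + h *\<^sub>R x)$fst e) else 0)
        = (\<lambda>e. if E (fst e) (snd e) then (1 / norm (q$snd e - q$fst e)) *\<^sub>R (q$snd e - q$fst e) else 0)"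
      by (auto split: if_split)
    then show "bearing_fun E (q + h *\<^sub>R x) = bearing_fun E q"
      unfolding bearing_fun_def by (simp only:)
  qed
qed

lemma constant_vecs_subspace: "subspace {(\<chi> i. c) | c :: 'a::real_vector. True}"
proof (rule subspaceI)
  show "0 \<in> {(\<chi> i. c) | c :: 'a. True}"
    by (auto simp: vec_eq_iff)
  fix x y :: "'a^'n" and r :: real
  assume "x \<in> {(\<chi> i. c) | c. True}" "y \<in> {(\<chi> i. c) | c. True}"
  then obtain a b where "x = (\<chi> i. a)" "y = (\<chi> i. b)"
    by blast
  then show "x + y \<in> {(\<chi> i. c) | c. True}" "r *\<^sub>R x \<in> {(\<chi> i. c) | c. True}"
    by (auto simp: vec_eq_iff intro!: exI[of _ "a + b"] exI[of _ "r *\<^sub>R a"])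
qed

lemma inf_bearing_rigid_parallel_motion:
  assumes rigid: "inf_bearing_rigid E q"
    and parallel: "\<And>i j. E i j \<Longrightarrow> \<exists>b. x$j - x$i = b *\<^sub>R (q$j - q$i)"
  shows "\<exists>k c. \<forall>i. x$i = c + k *\<^sub>R q$i"
proof -
  obtain R where R: "(bearing_fun E has_derivative R) (at q)"
    and kernel: "{x. R x = 0} = span ({(\<chi> i. c) | c. True} \<union> {q})"
    using rigid unfolding inf_bearing_rigid_def by (elim conjE exE) (rule that)
  define \<beta> where "\<beta> i j = (SOME b. x$j - x$i = b *\<^sub>R (q$j - q$i))" for i j
  have \<beta>: "x$j - x$i = \<beta> i j *\<^sub>R (q$j - q$i)" if "E i j" for i j
    unfolding \<beta>_def by (rule someI_ex) (rule parallel[OF that])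
  have "((\<lambda>h::real. q + h *\<^sub>R x) has_derivative (\<lambda>h. h *\<^sub>R x)) (at 0)"
    by (auto intro!: derivative_eq_intros)
  moreover have "(bearing_fun E has_derivative R) (at ((\<lambda>h::real. q + h *\<^sub>R x) 0))"
    using R by simp
  ultimately have "((\<lambda>h::real. bearing_fun E (q + h *\<^sub>R x)) has_derivative (\<lambda>h. R (h *\<^sub>R x))) (at 0)"
    by (rule diff_chain_at[unfolded o_def])
  moreover have "((\<lambda>h::real. bearing_fun E (q + h *\<^sub>R x)) has_derivative (\<lambda>h. 0)) (at 0)"
    by (rule has_derivative_transform_eventually[OF has_derivative_const
          eventually_mono[OF bearing_fun_eventually_eq[OF \<beta>]]]) auto
  ultimately have "(\<lambda>h. R (h *\<^sub>R x)) = (\<lambda>h. 0)"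
    by (rule has_derivative_unique)
  then have "R x = 0"
    by (metis scaleR_one)
  then have "x \<in> span (insert q {(\<chi> i. c) | c. True})"
    using kernel by auto
  then obtain k where "x - k *\<^sub>R q \<in> {(\<chi> i. c) | c. True}"
    unfolding span_insert span_eq_iff[THEN iffD2, OF constant_vecs_subspace] by blast
  then obtain c where "x - k *\<^sub>R q = (\<chi> i. c)"
    by blast
  then have "x$i - k *\<^sub>R q$i = c" for i
    by (metis vec_lambda_beta vector_minus_component vector_scaleR_component)
  then have "x$i = c + k *\<^sub>R q$i" for i
    by (metis diff_eq_eq add.commute)
  then show ?thesis
    by blast
qed

lemma rigid_target_formation_follower_definite:
  assumes tf: "target_formation E g VL pl q" and rigid: "inf_bearing_rigid E q"
    and undirected: "undirected_graph E" and leaders: "card VL \<ge> 2"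
    and follower: "fol VL x = x" and kernel: "x \<bullet> bearing_lap E g x = 0"
  shows "x = 0"
proof -
  interpret bearing_graph E g
    by (rule target_formation_bearing_graph[OF tf undirected])
  obtain k c where kc: "\<And>i. x$i = c + k *\<^sub>R q$i"
    using inf_bearing_rigid_parallel_motion[OF rigid]
      target_formation_proj_eq_0_imp_parallel[OF tf _ bearing_lap_quadratic_eq_0[OF kernel]]
    by blast
  obtain i1 i2 where i: "i1 \<in> VL" "i2 \<in> VL" "i1 \<noteq> i2"
    using leaders card_le_Suc0_iff_eq[of VL] by (auto simp: not_le[symmetric])
  have leader_0: "x$i = 0" if "i \<in> VL" for i
    using that arg_cong[OF follower, of "\<lambda>y. y $ i"] by (simp add: fol_def)
  have "k *\<^sub>R (q$i1 - q$i2) = (c + k *\<^sub>R q$i1) - (c + k *\<^sub>R q$i2)"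
    by (simp add: algebra_simps)
  also have "\<dots> = 0"
    using leader_0[OF i(1)] leader_0[OF i(2)] by (simp add: kc[symmetric])
  finally have "k = 0"
    using rigid i(3) unfolding inf_bearing_rigid_def by auto
  then have "c = 0"
    using leader_0[OF i(1)] kc[of i1] by simp
  then show "x = 0"
    using \<open>k = 0\<close> kc by (simp add: vec_eq_iff)
qed

section \<open>The closed loop\<close>

lemma linear_L_ff:
  fixes E :: "'n::finite \<Rightarrow> 'n \<Rightarrow> bool" and g :: "'n \<Rightarrow> 'n \<Rightarrow> real^'d::finite"
  shows "linear (L_ff E g VL)"
proof -
  have "L_ff E g VL = fol VL \<circ> bearing_lap E g \<circ> fol VL"
    by (rule ext) (simp add: L_ff_def)
  then show ?thesis
    by (simp add: linear_compose linear_fol linear_bearing_lap)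
qed

lemma fol_L_ff [simp]: "fol VL (L_ff E g VL x) = L_ff E g VL x"
  and lead_L_ff [simp]: "lead VL (L_ff E g VL x) = 0"
  and L_ff_fol [simp]: "L_ff E g VL (fol VL x) = L_ff E g VL x"
  by (simp_all add: L_ff_def)

lemma L_fl_lead [simp]: "L_fl E g VL (lead VL y) = L_fl E g VL y"
  by (simp add: L_fl_def)

lemma linear_L_fl:
  fixes E :: "'n::finite \<Rightarrow> 'n \<Rightarrow> bool" and g :: "'n \<Rightarrow> 'n \<Rightarrow> real^'d::finite"
  shows "linear (L_fl E g VL)"
proof -
  have "L_fl E g VL = fol VL \<circ> bearing_lap E g \<circ> lead VL"
    by (rule ext) (simp add: L_fl_def)
  then show ?thesis
    by (simp add: linear_compose linear_fol linear_lead linear_bearing_lap)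
qed

lemma fol_bearing_lap_split:
  fixes E :: "'n::finite \<Rightarrow> 'n \<Rightarrow> bool" and g :: "'n \<Rightarrow> 'n \<Rightarrow> real^'d::finite"
  shows "fol VL (bearing_lap E g y) = L_ff E g VL y + L_fl E g VL y"
  using linear_add[OF linear_bearing_lap, of E g "fol VL y" "lead VL y"]
  by (simp add: L_ff_def L_fl_def fol_add_lead)

lemma closed_loop_follower_deriv:
  assumes "closed_loop E g VL v kP kI p \<xi>" and "t \<ge> 0"
  shows "((\<lambda>s. fol VL (p s)) has_vector_derivative
           - kP *\<^sub>R fol VL (bearing_lap E g (p t)) - kI *\<^sub>R fol VL (\<xi> t)) (at t within {0..})"
proof (rule has_vector_derivative_vec)
  fix i
  show "((\<lambda>s. fol VL (p s) $ i) has_vector_derivative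
      (- kP *\<^sub>R fol VL (bearing_lap E g (p t)) - kI *\<^sub>R fol VL (\<xi> t)) $ i) (at t within {0..})"
    using assms by (cases "i \<in> VL") (auto simp: closed_loop_def fol_def bearing_lap_def)
qed

lemma closed_loop_leader_deriv:
  assumes "closed_loop E g VL v kP kI p \<xi>" and "t \<ge> 0"
  shows "((\<lambda>s. lead VL (p s)) has_vector_derivative lead VL v) (at t within {0..})"
proof (rule has_vector_derivative_vec)
  fix i
  show "((\<lambda>s. lead VL (p s) $ i) has_vector_derivative lead VL v $ i) (at t within {0..})"
    using assms by (cases "i \<in> VL") (auto simp: closed_loop_def lead_def)
qed

lemma closed_loop_integrator_deriv:
  assumes "closed_loop E g VL v kP kI p \<xi>" and "t \<ge> 0"
  shows "((\<lambda>s. fol VL (\<xi> s)) has_vector_derivative fol VL (bearing_lap E g (p t))) (at t within {0..})"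
proof (rule has_vector_derivative_vec)
  fix i
  show "((\<lambda>s. fol VL (\<xi> s) $ i) has_vector_derivative fol VL (bearing_lap E g (p t)) $ i) (at t within {0..})"
    using assms by (cases "i \<in> VL") (auto simp: closed_loop_def fol_def bearing_lap_def)
qed

lemma closed_loop_follower_velocity:
  assumes "closed_loop E g VL v kP kI p \<xi>" and "t > 0"
  shows "fol VL (\<chi> i. vector_derivative (\<lambda>s. p s $ i) (at t))
    = - kP *\<^sub>R fol VL (bearing_lap E g (p t)) - kI *\<^sub>R fol VL (\<xi> t)"
proof (subst vec_eq_iff, intro allI)
  fix i
  have "i \<notin> VL \<Longrightarrow> ((\<lambda>s. p s $ i) has_vector_derivative
      - kP *\<^sub>R bearing_lap E g (p t) $ i - kI *\<^sub>R \<xi> t $ i) (at t within {0..})"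
    using assms unfolding closed_loop_def bearing_lap_def by auto
  moreover have "at t within {0..} = at t"
    using assms(2) by (intro at_within_interior) simp
  ultimately have "i \<notin> VL \<Longrightarrow> ((\<lambda>s. p s $ i) has_vector_derivative
      - kP *\<^sub>R bearing_lap E g (p t) $ i - kI *\<^sub>R \<xi> t $ i) (at t)"
    by simp
  then show "fol VL (\<chi> i. vector_derivative (\<lambda>s. p s $ i) (at t)) $ i
      = (- kP *\<^sub>R fol VL (bearing_lap E g (p t)) - kI *\<^sub>R fol VL (\<xi> t)) $ i"
    by (simp add: fol_def vector_derivative_at)
qed

locale leader_follower = bearing_graph E g
  for E :: "'n::finite \<Rightarrow> 'n \<Rightarrow> bool" and g :: "'n \<Rightarrow> 'n \<Rightarrow> real^'d::finite" +
  fixes VL :: "'n set"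
  assumes follower_definite: "fol VL x = x \<Longrightarrow> x \<bullet> bearing_lap E g x = 0 \<Longrightarrow> x = 0"
begin

lemma L_ff_self_adjoint: "L_ff E g VL x \<bullet> y = x \<bullet> L_ff E g VL y"
proof -
  have "L_ff E g VL x \<bullet> y = bearing_lap E g (fol VL x) \<bullet> fol VL y"
    by (simp add: L_ff_def inner_fol)
  also have "\<dots> = fol VL x \<bullet> bearing_lap E g (fol VL y)"
    by (rule bearing_lap_self_adjoint)
  also have "\<dots> = x \<bullet> L_ff E g VL y"
    by (simp add: L_ff_def inner_fol)
  finally show ?thesis .
qed

lemma L_ff_pos: "fol VL x = x \<Longrightarrow> x \<noteq> 0 \<Longrightarrow> x \<bullet> L_ff E g VL x > 0"
  using follower_definite[of x] bearing_lap_quadratic_nonneg[of x]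
  by (metis L_ff_def inner_fol order_neq_le_trans)

lemma L_ff_eq_0_imp: "fol VL x = x \<Longrightarrow> L_ff E g VL x = 0 \<Longrightarrow> x = 0"
  using L_ff_pos[of x] by fastforce

lemma L_ff_coercive:
  obtains \<mu> where "\<mu> > 0" "\<And>x. fol VL x = x \<Longrightarrow> \<mu> * (norm x)\<^sup>2 \<le> x \<bullet> L_ff E g VL x"
proof -
  have "closed {x :: real^'d^'n. fol VL x = x}"
    using linear_fol[of VL]
    by (intro closed_Collect_eq continuous_on_id linear_continuous_on) (simp add: linear_conv_bounded_linear)
  then show ?thesis
    using quadratic_form_coercive[OF linear_L_ff[of E g VL], of "{x. fol VL x = x}"] L_ff_pos that
    by auto
qed

text \<open>Adding the leader part turns \<open>L_ff\<close> into an injective, hence surjective, operator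
  on the whole space.\<close>

lemma L_ff_solvable: "\<exists>!x. fol VL x = x \<and> L_ff E g VL x = fol VL w"
proof -
  define T where "T x = L_ff E g VL x + lead VL x" for x
  have "linear T"
    unfolding T_def[abs_def] by (intro linear_compose_add linear_L_ff linear_lead)
  moreover have "inj T"
  proof (rule linear_injective_0[THEN iffD2, OF \<open>linear T\<close>], intro allI impI)
    fix x assume "T x = 0"
    then have "fol VL (T x) = 0" "lead VL (T x) = 0"
      by simp_all
    then have "L_ff E g VL x = 0" "lead VL x = 0"
      by (simp_all add: T_def)
    then show "x = 0"
      using L_ff_eq_0_imp fol_add_lead[of VL x] by simp
  qed
  ultimately obtain x where "T x = fol VL w"
    by (metis linear_injective_imp_surjective surjD)
  then have "fol VL (T x) = fol VL w" "lead VL (T x) = 0"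
    by simp_all
  then have "L_ff E g VL x = fol VL w" "lead VL x = 0"
    by (simp_all add: T_def)
  moreover have "y = x" if "fol VL y = y" "L_ff E g VL y = fol VL w" for y
  proof -
    have "L_ff E g VL (y - x) = 0"
      unfolding linear_diff[OF linear_L_ff] using that(2) \<open>L_ff E g VL x = fol VL w\<close> by simp
    then show ?thesis
      using L_ff_eq_0_imp[of "y - x"] that \<open>lead VL x = 0\<close> fol_add_lead[of VL x] by simp
  qed
  ultimately show ?thesis
    using fol_add_lead[of VL x] by (intro ex1I[of _ x]) auto
qed

lemma fol_L_ff_inv [simp]: "fol VL (L_ff_inv E g VL w) = L_ff_inv E g VL w"
  and L_ff_L_ff_inv [simp]: "L_ff E g VL (L_ff_inv E g VL w) = fol VL w"
  using theI'[OF L_ff_solvable[of w]] by (simp_all add: L_ff_inv_def)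

lemma L_ff_inv_eqI: "fol VL y = y \<Longrightarrow> L_ff E g VL y = fol VL w \<Longrightarrow> L_ff_inv E g VL w = y"
  using L_ff_solvable[of w] fol_L_ff_inv[of w] L_ff_L_ff_inv[of w] by blast

lemma linear_L_ff_inv: "linear (L_ff_inv E g VL)"
  by (rule linearI; rule L_ff_inv_eqI) (simp_all add: linear_add[OF linear_L_ff] linear_scale[OF linear_L_ff])

lemma L_ff_tracking_error:
  "L_ff E g VL (fol VL y + L_ff_inv E g VL (L_fl E g VL y)) = fol VL (bearing_lap E g y)"
proof -
  have "L_ff E g VL (fol VL y + L_ff_inv E g VL (L_fl E g VL y))
      = L_ff E g VL y + L_ff E g VL (L_ff_inv E g VL (L_fl E g VL y))"
    by (simp add: linear_add[OF linear_L_ff])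
  also have "\<dots> = L_ff E g VL y + L_fl E g VL y"
    by (simp add: L_fl_def)
  finally show ?thesis
    by (simp add: fol_bearing_lap_split)
qed

lemma closed_loop_error_system:
  assumes cl: "closed_loop E g VL v kP kI p \<xi>" and "kP > 0" "kI > 0"
    and "\<mu> > 0" and coercive: "\<And>x. fol VL x = x \<Longrightarrow> \<mu> * (norm x)\<^sup>2 \<le> x \<bullet> L_ff E g VL x"
    and "M > 0" and bounded: "\<And>x. norm (L_ff E g VL x) \<le> M * norm x"
  shows "PI_error_system kP kI \<mu> M (L_ff E g VL)
    (\<lambda>t. fol VL (p t) + L_ff_inv E g VL (L_fl E g VL (p t)))
    (\<lambda>t. fol VL (\<xi> t) - (1 / kI) *\<^sub>R L_ff_inv E g VL (L_fl E g VL v))"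
proof (rule PI_error_system.intro)
  let ?K = "\<lambda>y. L_ff_inv E g VL (L_fl E g VL y)"
  have K: "bounded_linear ?K"
    using linear_compose[OF linear_L_fl linear_L_ff_inv]
    by (simp add: o_def linear_conv_bounded_linear)
  fix t :: real assume t: "t \<ge> 0"
  have "((\<lambda>s. ?K (lead VL (p s))) has_vector_derivative ?K (lead VL v)) (at t within {0..})"
    by (rule bounded_linear.has_vector_derivative[OF K closed_loop_leader_deriv[OF cl t]])
  then have "((\<lambda>s. fol VL (p s) + ?K (p s)) has_vector_derivative
      (- kP *\<^sub>R fol VL (bearing_lap E g (p t)) - kI *\<^sub>R fol VL (\<xi> t)) + ?K v) (at t within {0..})"
    by (intro has_vector_derivative_add closed_loop_follower_deriv[OF cl t]) simp
  moreover have "(- kP *\<^sub>R fol VL (bearing_lap E g (p t)) - kI *\<^sub>R fol VL (\<xi> t)) + ?K v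
      = - kP *\<^sub>R L_ff E g VL (fol VL (p t) + ?K (p t)) - kI *\<^sub>R (fol VL (\<xi> t) - (1 / kI) *\<^sub>R ?K v)"
    using \<open>kI > 0\<close> by (simp add: L_ff_tracking_error algebra_simps)
  ultimately show "((\<lambda>t. fol VL (p t) + ?K (p t)) has_vector_derivative
      - kP *\<^sub>R L_ff E g VL (fol VL (p t) + ?K (p t))
      - kI *\<^sub>R (fol VL (\<xi> t) - (1 / kI) *\<^sub>R ?K v)) (at t within {0..})"
    by simp
  show "((\<lambda>t. fol VL (\<xi> t) - (1 / kI) *\<^sub>R ?K v) has_vector_derivative
      L_ff E g VL (fol VL (p t) + ?K (p t))) (at t within {0..})"
    unfolding L_ff_tracking_error has_vector_derivative_diff_const
    by (rule closed_loop_integrator_deriv[OF cl t])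
  show "\<mu> * (norm (fol VL (p t) + ?K (p t)))\<^sup>2
      \<le> (fol VL (p t) + ?K (p t)) \<bullet> L_ff E g VL (fol VL (p t) + ?K (p t))"
    by (rule coercive) simp
qed (use assms linear_L_ff[of E g VL] in \<open>simp_all add: L_ff_self_adjoint linear_conv_bounded_linear\<close>)

lemma follower_velocity_tendsto:
  assumes cl: "closed_loop E g VL v kP kI p \<xi>" and "kI > 0"
    and \<delta>: "((\<lambda>t. fol VL (p t) + L_ff_inv E g VL (L_fl E g VL (p t))) \<longlongrightarrow> 0) at_top"
    and \<xi>: "((\<lambda>t. fol VL (\<xi> t)) \<longlongrightarrow> (1 / kI) *\<^sub>R L_ff_inv E g VL (L_fl E g VL v)) at_top"
  shows "((\<lambda>t. fol VL (\<chi> i. vector_derivative (\<lambda>s. p s $ i) (at t)))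
    \<longlongrightarrow> - L_ff_inv E g VL (L_fl E g VL v)) at_top"
proof -
  let ?\<delta> = "\<lambda>t. fol VL (p t) + L_ff_inv E g VL (L_fl E g VL (p t))"
  have "\<forall>\<^sub>F t in at_top. - kP *\<^sub>R L_ff E g VL (?\<delta> t) - kI *\<^sub>R fol VL (\<xi> t)
      = fol VL (\<chi> i. vector_derivative (\<lambda>s. p s $ i) (at t))"
    using eventually_gt_at_top[of 0]
    by eventually_elim (simp add: closed_loop_follower_velocity[OF cl] L_ff_tracking_error)
  moreover have "((\<lambda>t. - kP *\<^sub>R L_ff E g VL (?\<delta> t) - kI *\<^sub>R fol VL (\<xi> t))
      \<longlongrightarrow> - kP *\<^sub>R L_ff E g VL 0 - kI *\<^sub>R ((1 / kI) *\<^sub>R L_ff_inv E g VL (L_fl E g VL v))) at_top"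
  proof -
    have "bounded_linear (L_ff E g VL)"
      using linear_L_ff by (simp add: linear_conv_bounded_linear)
    then have "((\<lambda>t. L_ff E g VL (?\<delta> t)) \<longlongrightarrow> L_ff E g VL 0) at_top"
      by (rule bounded_linear.tendsto[OF _ \<delta>])
    then show ?thesis
      by (intro tendsto_diff tendsto_scaleR tendsto_const \<xi>)
  qed
  moreover have "- kP *\<^sub>R L_ff E g VL 0 - kI *\<^sub>R ((1 / kI) *\<^sub>R L_ff_inv E g VL (L_fl E g VL v))
      = - L_ff_inv E g VL (L_fl E g VL v)"
    using \<open>kI > 0\<close> linear_0[OF linear_L_ff[of E g VL]] by simp
  ultimately show ?thesis
    by (auto intro: Lim_transform_eventually)
qed

lemma closed_loop_exponential_convergence:
  assumes "kP > 0" and "kI > 0"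
  shows "\<exists>c \<alpha>. c > 0 \<and> \<alpha> > 0 \<and>
    (\<forall>p \<xi>. closed_loop E g VL v kP kI p \<xi> \<longrightarrow>
      (let \<delta> = (\<lambda>t. fol VL (p t) - (- L_ff_inv E g VL (L_fl E g VL (p t))));
           \<xi>f = (\<lambda>t. fol VL (\<xi> t));
           \<xi>inf = (1 / kI) *\<^sub>R L_ff_inv E g VL (L_fl E g VL v)
       in (\<forall>t\<ge>0. norm (\<delta> t) + norm (\<xi>f t - \<xi>inf)
                   \<le> c * exp (- \<alpha> * t) * (norm (\<delta> 0) + norm (\<xi>f 0 - \<xi>inf))) \<and>
          (\<delta> \<longlongrightarrow> 0) at_top \<and>
          (\<xi>f \<longlongrightarrow> \<xi>inf) at_top \<and>
          ((\<lambda>t. fol VL (\<chi> i. vector_derivative (\<lambda>s. p s $ i) (at t)))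
              \<longlongrightarrow> - L_ff_inv E g VL (L_fl E g VL v)) at_top))"
proof -
  obtain \<mu> where \<mu>: "\<mu> > 0" and coercive: "\<And>x. fol VL x = x \<Longrightarrow> \<mu> * (norm x)\<^sup>2 \<le> x \<bullet> L_ff E g VL x"
    using L_ff_coercive by blast
  obtain M where M: "M > 0" and bounded: "\<And>x. norm (L_ff E g VL x) \<le> M * norm x"
    using bounded_linear.pos_bounded[of "L_ff E g VL"] linear_L_ff[of E g VL]
    by (auto simp: linear_conv_bounded_linear mult.commute)
  obtain c \<alpha> where "c > 0" "\<alpha> > 0" and bound: "\<And>(L :: real^'d^'n \<Rightarrow> real^'d^'n) \<delta> e t.
      PI_error_system kP kI \<mu> M L \<delta> e \<Longrightarrow> t \<ge> 0 \<Longrightarrow>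
      norm (\<delta> t) + norm (e t) \<le> c * exp (- \<alpha> * t) * (norm (\<delta> 0) + norm (e 0))"
    using PI_error_exponential_bound[OF assms \<mu> M] by blast
  show ?thesis
  proof (intro exI conjI allI impI)
    fix p \<xi> assume cl: "closed_loop E g VL v kP kI p \<xi>"
    define \<xi>inf where "\<xi>inf = (1 / kI) *\<^sub>R L_ff_inv E g VL (L_fl E g VL v)"
    define \<delta> e where "\<delta> t = fol VL (p t) + L_ff_inv E g VL (L_fl E g VL (p t))"
      and "e t = fol VL (\<xi> t) - \<xi>inf" for t
    have decay: "norm (\<delta> t) + norm (e t) \<le> c * exp (- \<alpha> * t) * (norm (\<delta> 0) + norm (e 0))"
      if "t \<ge> 0" for t
      using bound[OF closed_loop_error_system[OF cl assms \<mu> coercive M bounded] that]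
      by (simp add: \<delta>_def e_def \<xi>inf_def)
    then have "(\<delta> \<longlongrightarrow> 0) at_top" "(e \<longlongrightarrow> 0) at_top"
      using exp_bound_tendsto_0[OF \<open>\<alpha> > 0\<close>, of \<delta> e "c * (norm (\<delta> 0) + norm (e 0))"]
      by (simp_all add: mult_ac)
    moreover from this(2) have "((\<lambda>t. fol VL (\<xi> t)) \<longlongrightarrow> \<xi>inf) at_top"
      unfolding Lim_null[of _ \<xi>inf] by (simp add: e_def[abs_def])
    ultimately show "let \<delta> = (\<lambda>t. fol VL (p t) - (- L_ff_inv E g VL (L_fl E g VL (p t))));
           \<xi>f = (\<lambda>t. fol VL (\<xi> t));
           \<xi>inf = (1 / kI) *\<^sub>R L_ff_inv E g VL (L_fl E g VL v)
       in (\<forall>t\<ge>0. norm (\<delta> t) + norm (\<xi>f t - \<xi>inf)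
                   \<le> c * exp (- \<alpha> * t) * (norm (\<delta> 0) + norm (\<xi>f 0 - \<xi>inf))) \<and>
          (\<delta> \<longlongrightarrow> 0) at_top \<and>
          (\<xi>f \<longlongrightarrow> \<xi>inf) at_top \<and>
          ((\<lambda>t. fol VL (\<chi> i. vector_derivative (\<lambda>s. p s $ i) (at t)))
              \<longlongrightarrow> - L_ff_inv E g VL (L_fl E g VL v)) at_top"
      using decay follower_velocity_tendsto[OF cl \<open>kI > 0\<close>]
      by (simp add: Let_def \<delta>_def[abs_def] e_def \<xi>inf_def)
  qed (use \<open>c > 0\<close> \<open>\<alpha> > 0\<close> in auto)
qed

end

theorem theorem2:
  fixes E :: "'n::finite \<Rightarrow> 'n \<Rightarrow> bool"
    and g :: "'n \<Rightarrow> 'n \<Rightarrow> real^'d::finite"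
    and VL :: "'n set"
    and v :: "real^'d^'n"
    and kP kI :: real
  assumes "CARD('d) \<ge> 2"
    and "undirected_graph E"
    and "card VL \<ge> 2"
    and "kP > 0" and "kI > 0"
  shows "\<exists>c \<alpha>. c > 0 \<and> \<alpha> > 0 \<and>
    (\<forall>p \<xi>. closed_loop E g VL v kP kI p \<xi> \<and> standing_assumption E g VL p \<longrightarrow>
      (let \<delta> = (\<lambda>t. fol VL (p t) - (- L_ff_inv E g VL (L_fl E g VL (p t))));
           \<xi>f = (\<lambda>t. fol VL (\<xi> t));
           \<xi>inf = (1 / kI) *\<^sub>R L_ff_inv E g VL (L_fl E g VL v)
       in (\<forall>t\<ge>0. norm (\<delta> t) + norm (\<xi>f t - \<xi>inf)
                   \<le> c * exp (- \<alpha> * t) * (norm (\<delta> 0) + norm (\<xi>f 0 - \<xi>inf))) \<and>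
          (\<delta> \<longlongrightarrow> 0) at_top \<and>
          (\<xi>f \<longlongrightarrow> \<xi>inf) at_top \<and>
          ((\<lambda>t. fol VL (\<chi> i. vector_derivative (\<lambda>s. p s $ i) (at t)))
              \<longlongrightarrow> - L_ff_inv E g VL (L_fl E g VL v)) at_top))"
proof (cases "\<exists>pl q. target_formation E g VL pl q \<and> inf_bearing_rigid E q")
  case True
  then obtain pl q where tf: "target_formation E g VL pl q" and rigid: "inf_bearing_rigid E q"
    by blast
  interpret leader_follower E g VL
    using target_formation_bearing_graph[OF tf assms(2)]
      rigid_target_formation_follower_definite[OF tf rigid assms(2,3)]
    by (simp add: leader_follower_def leader_follower_axioms_def)
  show ?thesis
    using closed_loop_exponential_convergence[OF assms(4,5)] by blast
next
  case False
  then have "\<not> standing_assumption E g VL p" for p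
    by (auto simp: standing_assumption_def)
  then show ?thesis
    by (intro exI[of _ 1]) simp
qed

end
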